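(* Let $t\geq 2$ be a fixed integer and let $P$ be a finite poset with the unique cover twin property (UCTP) having at least $2$ elements. Then $\mathrm{sat}^{\star}([t]^n,P)=\Omega(\sqrt{n})$ as $n\to\infty$.
   Context: For positive integers $n,t$, $[n]=\{1,\dots,n\}$ and the hypergrid $[t]^n$ is the set of functions $f:[n]\to[t]$, partially ordered by $f\leq g$ iff $f(i)\leq g(i)$ for all $i\in[n]$. An induced copy of a poset $P$ in a family $\mathcal{F}\subseteq[t]^n$ is an injective map $\phi:P\to\mathcal{F}$ such that $\phi(x)\leq\phi(y)$ iff $x\leq_P y$. A family $\mathcal{F}\subseteq[t]^n$ is induced $P$-free if it contains no induced copy of $P$; it is induced $P$-saturated if it is induced $P$-free and for every $f\in[t]^n\setminus\mathcal{F}$ the family $\mathcal{F}\cup\{f\}$ contains an induced copy of $P$. Whenever $P$ embeds as an induced subposet of $[t]^n$, $\mathrm{sat}^{\star}([t]^n,P)$ denotes the minimum size of an induced $P$-saturated family in $[t]^n$. In a poset $P$, an element $x$ covers an element $y\neq x$ if $y\leq_P x$ and there is no $z\in P\setminus\{x,y\}$ with $y\leq_P z\leq_P x$. $P$ has the UCTP if whenever $x$ covers $y$, there exists $y'\in P\setminus\{x,y\}$ such that $x$ covers $y'$. *)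

theory Defs
  imports Complex_Main
begin

text \<open>The hypergrid [t]^n: functions [n] -> [t], represented as functions nat => nat
  that take values in {1..t} on {1..n} and are 0 outside {1..n} (extensional).
  The order is the pointwise order of functions (le_fun), which on the hypergrid
  coincides with f(i) <= g(i) for all i in [n].\<close>
definition hypergrid :: "nat \<Rightarrow> nat \<Rightarrow> (nat \<Rightarrow> nat) set" where
  "hypergrid t n = {f. (\<forall>i\<in>{1..n}. f i \<in> {1..t}) \<and> (\<forall>i. i \<notin> {1..n} \<longrightarrow> f i = 0)}"

text \<open>A finite poset is given by a carrier P and a relation r (x <=_P y iff (x,y) in r).\<close>

definition induced_copy :: "'a set \<Rightarrow> 'a rel \<Rightarrow> (nat \<Rightarrow> nat) set \<Rightarrow> ('a \<Rightarrow> (nat \<Rightarrow> nat)) \<Rightarrow> bool" where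
  "induced_copy P r F \<phi> \<longleftrightarrow> inj_on \<phi> P \<and> \<phi> ` P \<subseteq> F \<and>
     (\<forall>x\<in>P. \<forall>y\<in>P. \<phi> x \<le> \<phi> y \<longleftrightarrow> (x, y) \<in> r)"

definition induced_free :: "'a set \<Rightarrow> 'a rel \<Rightarrow> (nat \<Rightarrow> nat) set \<Rightarrow> bool" where
  "induced_free P r F \<longleftrightarrow> \<not> (\<exists>\<phi>. induced_copy P r F \<phi>)"

definition induced_saturated :: "nat \<Rightarrow> nat \<Rightarrow> 'a set \<Rightarrow> 'a rel \<Rightarrow> (nat \<Rightarrow> nat) set \<Rightarrow> bool" where
  "induced_saturated t n P r F \<longleftrightarrow> F \<subseteq> hypergrid t n \<and> induced_free P r F \<and>
     (\<forall>f \<in> hypergrid t n - F. \<not> induced_free P r (insert f F))"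

definition embeds_in_grid :: "nat \<Rightarrow> nat \<Rightarrow> 'a set \<Rightarrow> 'a rel \<Rightarrow> bool" where
  "embeds_in_grid t n P r \<longleftrightarrow> (\<exists>\<phi>. induced_copy P r (hypergrid t n) \<phi>)"

definition sat_star :: "nat \<Rightarrow> nat \<Rightarrow> 'a set \<Rightarrow> 'a rel \<Rightarrow> nat" where
  "sat_star t n P r = Min (card ` {F. induced_saturated t n P r F})"

definition covers :: "'a set \<Rightarrow> 'a rel \<Rightarrow> 'a \<Rightarrow> 'a \<Rightarrow> bool" where
  "covers P r x y \<longleftrightarrow> x \<in> P \<and> y \<in> P \<and> (y, x) \<in> r \<and> y \<noteq> x \<and>
     \<not> (\<exists>z\<in>P - {x, y}. (y, z) \<in> r \<and> (z, x) \<in> r)"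

definition UCTP :: "'a set \<Rightarrow> 'a rel \<Rightarrow> bool" where
  "UCTP P r \<longleftrightarrow> (\<forall>x\<in>P. \<forall>y\<in>P. covers P r x y \<longrightarrow> (\<exists>y'\<in>P - {x, y}. covers P r x y'))"

end

theory Submission
  imports Defs
begin

text \<open>
  Let F be an induced P-saturated family. For every coordinate i, F contains g and h such that
  h exceeds g in coordinate i and nowhere else; as the pair (g, h) determines i, this gives
  n \<le> |F|^2. If there were no such pair, one could find f \<notin> F comparable to some g \<in> F and
  comparable to exactly the same other members of F as g (raise a maximal g by one in coordinate
  i, or lower a minimal g if all of F sits at level t there). By saturation F \<union> {f} contains an
  induced copy of P through f. If the copy avoids g, replacing f by g yields a copy inside F;
  otherwise f and g represent elements u < w of P such that everything else below w is below u,
  which UCTP forbids.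
\<close>

lemma finite_hypergrid: "finite (hypergrid t n)"
proof -
  have "finite {f. \<forall>x. (x \<in> {1..n} \<longrightarrow> f x \<in> {1..t}) \<and> (x \<notin> {1..n} \<longrightarrow> f x = (0::nat))}"
    by (rule finite_set_of_finite_funs) auto
  then show ?thesis
    by (rule rev_finite_subset) (auto simp: hypergrid_def)
qed

lemma UCTP_obtains_lower_not_below:
  assumes po: "partial_order_on P r" and uctp: "UCTP P r"
    and "u \<in> P" "w \<in> P" "(u, w) \<in> r" "u \<noteq> w"
  obtains z where "z \<in> P" "z \<noteq> u" "z \<noteq> w" "(z, w) \<in> r" "(z, u) \<notin> r"
proof (cases "covers P r w u")
  case True
  then obtain y where y: "y \<in> P - {w, u}" "covers P r w y"
    using uctp \<open>u \<in> P\<close> \<open>w \<in> P\<close> unfolding UCTP_def by blast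
  have "(y, u) \<notin> r"
    using y \<open>u \<in> P\<close> \<open>(u, w) \<in> r\<close> \<open>u \<noteq> w\<close> unfolding covers_def by blast
  with y show thesis
    using that unfolding covers_def by blast
next
  case False
  then obtain z where z: "z \<in> P - {w, u}" "(u, z) \<in> r" "(z, w) \<in> r"
    using assms(3-6) unfolding covers_def by blast
  have "(z, u) \<notin> r"
    using z po antisymD unfolding partial_order_on_def by fastforce
  with z show thesis
    using that by blast
qed

lemma induced_copy_fun_upd:
  assumes copy: "induced_copy P r G \<phi>" and "x \<in> P" "g \<in> G'"
    and "\<phi> ` (P - {x}) \<subseteq> G'" "g \<notin> \<phi> ` (P - {x})"
    and same: "\<forall>z\<in>P - {x}. (\<phi> z \<le> g \<longleftrightarrow> \<phi> z \<le> \<phi> x) \<and> (g \<le> \<phi> z \<longleftrightarrow> \<phi> x \<le> \<phi> z)"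
  shows "induced_copy P r G' (\<phi>(x := g))"
proof -
  have "inj_on \<phi> P" and rel: "\<forall>a\<in>P. \<forall>b\<in>P. \<phi> a \<le> \<phi> b \<longleftrightarrow> (a, b) \<in> r"
    using copy unfolding induced_copy_def by blast+
  then have "inj_on (\<phi>(x := g)) P"
    using assms(5) by (auto simp: inj_on_def)
  moreover have "\<forall>a\<in>P. \<forall>b\<in>P. (\<phi>(x := g)) a \<le> (\<phi>(x := g)) b \<longleftrightarrow> (a, b) \<in> r"
    using rel same \<open>x \<in> P\<close> by auto
  ultimately show ?thesis
    using assms(3,4) unfolding induced_copy_def by auto
qed

definition twins :: "'b::order set \<Rightarrow> 'b \<Rightarrow> 'b \<Rightarrow> bool" where
  "twins F f g \<longleftrightarrow> (\<forall>h\<in>F - {g}. (h \<le> f \<longleftrightarrow> h \<le> g) \<and> (f \<le> h \<longleftrightarrow> g \<le> h))"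

lemma induced_saturated_no_twin:
  assumes sat: "induced_saturated t n P r F" and po: "partial_order_on P r" and uctp: "UCTP P r"
    and f: "f \<in> hypergrid t n - F" and "g \<in> F" and comparable: "g \<le> f \<or> f \<le> g"
    and twin: "twins F f g"
  shows False
proof -
  have free: "\<not> induced_copy P r F \<psi>" for \<psi>
    using sat unfolding induced_saturated_def induced_free_def by blast
  obtain \<phi> where copy: "induced_copy P r (insert f F) \<phi>"
    using sat f unfolding induced_saturated_def induced_free_def by blast
  then have rel: "\<And>a b. a \<in> P \<Longrightarrow> b \<in> P \<Longrightarrow> \<phi> a \<le> \<phi> b \<longleftrightarrow> (a, b) \<in> r"
    unfolding induced_copy_def by blast
  have "f \<in> \<phi> ` P"
    using copy free[of \<phi>] unfolding induced_copy_def by blast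
  then obtain x where "x \<in> P" and fx: "\<phi> x = f"
    by blast
  have others: "\<phi> ` (P - {x}) \<subseteq> F"
    using copy fx \<open>x \<in> P\<close> unfolding induced_copy_def inj_on_def by blast
  show False
  proof (cases "g \<in> \<phi> ` P")
    case False
    have "\<forall>z\<in>P - {x}. (\<phi> z \<le> g \<longleftrightarrow> \<phi> z \<le> \<phi> x) \<and> (g \<le> \<phi> z \<longleftrightarrow> \<phi> x \<le> \<phi> z)"
      using False others twin fx unfolding twins_def by blast
    then have "induced_copy P r F (\<phi>(x := g))"
      using induced_copy_fun_upd[OF copy \<open>x \<in> P\<close> \<open>g \<in> F\<close> others] False by blast
    with free show False
      by blast
  next
    case True
    then obtain x' where "x' \<in> P" and gx': "\<phi> x' = g"
      by blast
    have "x \<noteq> x'"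
      using fx gx' f \<open>g \<in> F\<close> by blast
    have below: "\<phi> z \<le> f \<longleftrightarrow> \<phi> z \<le> g" if "z \<in> P - {x, x'}" for z
    proof -
      have "\<phi> z \<noteq> g"
        using that gx' copy \<open>x' \<in> P\<close> unfolding induced_copy_def inj_on_def by blast
      with that others twin show ?thesis
        unfolding twins_def by blast
    qed
    from comparable show False
    proof
      assume "g \<le> f"
      then have "(x', x) \<in> r"
        using rel \<open>x \<in> P\<close> \<open>x' \<in> P\<close> fx gx' by blast
      then obtain z where "z \<in> P - {x, x'}" "(z, x) \<in> r" "(z, x') \<notin> r"
        using UCTP_obtains_lower_not_below[OF po uctp \<open>x' \<in> P\<close> \<open>x \<in> P\<close>] \<open>x \<noteq> x'\<close>
        by blast
      then show False
        using below rel fx gx' \<open>x \<in> P\<close> \<open>x' \<in> P\<close> by blast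
    next
      assume "f \<le> g"
      then have "(x, x') \<in> r"
        using rel \<open>x \<in> P\<close> \<open>x' \<in> P\<close> fx gx' by blast
      then obtain z where "z \<in> P - {x, x'}" "(z, x') \<in> r" "(z, x) \<notin> r"
        using UCTP_obtains_lower_not_below[OF po uctp \<open>x \<in> P\<close> \<open>x' \<in> P\<close>] \<open>x \<noteq> x'\<close>
        by blast
      then show False
        using below rel fx gx' \<open>x \<in> P\<close> \<open>x' \<in> P\<close> by blast
    qed
  qed
qed

definition exceeds_only_at :: "'a \<Rightarrow> ('a \<Rightarrow> 'b::order) \<Rightarrow> ('a \<Rightarrow> 'b) \<Rightarrow> bool" where
  "exceeds_only_at i h g \<longleftrightarrow> g i < h i \<and> (\<forall>j. j \<noteq> i \<longrightarrow> h j \<le> g j)"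

lemma exceeds_only_at_unique:
  assumes "exceeds_only_at i h g" and "exceeds_only_at j h g"
  shows "i = j"
  using assms unfolding exceeds_only_at_def by (metis leD)

lemma card_le_square_if_exceeds_only_at:
  assumes "finite F" and "\<forall>i\<in>I. \<exists>g\<in>F. \<exists>h\<in>F. exceeds_only_at i h g"
  shows "card I \<le> card F ^ 2"
proof -
  have "\<forall>i\<in>I. \<exists>q\<in>F \<times> F. exceeds_only_at i (snd q) (fst q)"
    using assms(2) by auto
  then obtain p where p: "\<forall>i\<in>I. p i \<in> F \<times> F \<and> exceeds_only_at i (snd (p i)) (fst (p i))"
    by metis
  then have "inj_on p I"
    by (metis exceeds_only_at_unique inj_onI)
  with p have "card I \<le> card (F \<times> F)"
    using \<open>finite F\<close> by (intro card_inj_on_le) auto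
  then show ?thesis
    by (simp add: card_cartesian_product power2_eq_square)
qed

lemma twin_above_exists:
  assumes F: "F \<subseteq> hypergrid t n" and i: "i \<in> {1..n}" and "h\<^sub>0 \<in> F" "h\<^sub>0 i < t"
    and no_pair: "\<forall>g\<in>F. \<forall>h\<in>F. \<not> exceeds_only_at i h g"
  obtains f g where "f \<in> hypergrid t n - F" "g \<in> F" "g \<le> f" "twins F f g"
proof -
  define A where "A = {h\<in>F. h i = h\<^sub>0 i}"
  have "finite A"
    using F finite_hypergrid unfolding A_def by (auto intro: finite_subset)
  moreover have "A \<noteq> {}"
    using \<open>h\<^sub>0 \<in> F\<close> unfolding A_def by blast
  ultimately obtain g where "g \<in> A" and g_max: "\<forall>h\<in>A. g \<le> h \<longrightarrow> g = h"
    using finite_has_maximal by blast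
  then have "g \<in> F" and "g i = h\<^sub>0 i"
    unfolding A_def by auto
  define f where "f = g(i := Suc (g i))"
  have "g \<le> f" and "exceeds_only_at i f g"
    unfolding f_def le_fun_def exceeds_only_at_def by auto
  have "f \<in> hypergrid t n"
    using F \<open>g \<in> F\<close> \<open>g i = h\<^sub>0 i\<close> \<open>h\<^sub>0 i < t\<close> i unfolding f_def hypergrid_def by auto
  moreover have "f \<notin> F"
    using no_pair \<open>g \<in> F\<close> \<open>exceeds_only_at i f g\<close> by blast
  moreover have "twins F f g"
    unfolding twins_def
  proof (intro ballI conjI iffI)
    fix h assume h: "h \<in> F - {g}"
    show "h \<le> g" if "h \<le> f"
    proof -
      have "h j \<le> g j" if "j \<noteq> i" for j
        using \<open>h \<le> f\<close> that unfolding f_def le_fun_def by (metis fun_upd_other)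
      moreover have "h i \<le> g i"
        using no_pair h \<open>g \<in> F\<close> calculation unfolding exceeds_only_at_def by force
      ultimately show "h \<le> g"
        unfolding le_fun_def by metis
    qed
    show "f \<le> h" if "g \<le> h"
    proof -
      have "h i \<noteq> g i"
        using g_max h \<open>g \<le> h\<close> \<open>g i = h\<^sub>0 i\<close> unfolding A_def by auto
      with \<open>g \<le> h\<close> show "f \<le> h"
        unfolding f_def le_fun_def by (metis Suc_leI fun_upd_apply le_neq_implies_less)
    qed
  qed (use \<open>g \<le> f\<close> order_trans in blast)+
  ultimately show thesis
    using that \<open>g \<in> F\<close> \<open>g \<le> f\<close> by blast
qed

lemma twin_below_exists:
  assumes F: "F \<subseteq> hypergrid t n" "F \<noteq> {}" and "2 \<le> t" and i: "i \<in> {1..n}"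
    and top: "\<forall>h\<in>F. h i = t"
  obtains f g where "f \<in> hypergrid t n - F" "g \<in> F" "f \<le> g" "twins F f g"
proof -
  have "finite F"
    using F finite_hypergrid by (auto intro: finite_subset)
  then obtain g where "g \<in> F" and g_min: "\<forall>h\<in>F. h \<le> g \<longrightarrow> g = h"
    using finite_has_minimal F by blast
  define f where "f = g(i := t - 1)"
  have "f \<le> g"
    using top \<open>g \<in> F\<close> unfolding f_def le_fun_def by auto
  have "f \<in> hypergrid t n"
    using F \<open>g \<in> F\<close> \<open>2 \<le> t\<close> i unfolding f_def hypergrid_def by auto
  moreover have "f \<notin> F"
    using top \<open>2 \<le> t\<close> unfolding f_def by fastforce
  moreover have "twins F f g"
    unfolding twins_def
  proof (intro ballI conjI iffI)
    fix h assume h: "h \<in> F - {g}"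
    then have "\<not> h \<le> g"
      using g_min by blast
    then show "h \<le> g" if "h \<le> f"
      using that \<open>f \<le> g\<close> order_trans by blast
    show "h \<le> f" if "h \<le> g"
      using that \<open>\<not> h \<le> g\<close> by blast
    show "g \<le> h" if "f \<le> h"
      using that top h \<open>g \<in> F\<close> unfolding f_def le_fun_def by (metis DiffD1 fun_upd_apply order_refl)
  qed (use \<open>f \<le> g\<close> order_trans in blast)
  ultimately show thesis
    using that \<open>g \<in> F\<close> \<open>f \<le> g\<close> by blast
qed

lemma induced_saturated_nonempty:
  assumes sat: "induced_saturated t n P r F" and "1 \<le> t" and "2 \<le> card P"
  shows "F \<noteq> {}"
proof
  assume "F = {}"
  define f :: "nat \<Rightarrow> nat" where "f = (\<lambda>j. if j \<in> {1..n} then 1 else 0)"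
  have "f \<in> hypergrid t n"
    using \<open>1 \<le> t\<close> unfolding f_def hypergrid_def by auto
  then have "\<not> induced_free P r {f}"
    using sat \<open>F = {}\<close> unfolding induced_saturated_def by blast
  then obtain \<phi> where "inj_on \<phi> P" "\<phi> ` P \<subseteq> {f}"
    unfolding induced_free_def induced_copy_def by blast
  then have "card P \<le> card {f}"
    by (metis card_image card_mono finite.emptyI finite.insertI)
  with \<open>2 \<le> card P\<close> show False
    by simp
qed

lemma induced_saturated_exceeds_only_at:
  assumes sat: "induced_saturated t n P r F" and po: "partial_order_on P r" and uctp: "UCTP P r"
    and "2 \<le> t" "2 \<le> card P" and i: "i \<in> {1..n}"
  shows "\<exists>g\<in>F. \<exists>h\<in>F. exceeds_only_at i h g"
proof (rule ccontr)
  assume no_pair: "\<not> ?thesis"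
  have F: "F \<subseteq> hypergrid t n"
    using sat unfolding induced_saturated_def by blast
  obtain f g where "f \<in> hypergrid t n - F" "g \<in> F" "g \<le> f \<or> f \<le> g" "twins F f g"
  proof (cases "\<exists>h\<^sub>0\<in>F. h\<^sub>0 i < t")
    case True
    then show thesis
      using twin_above_exists[OF F i] no_pair that by metis
  next
    case False
    then have "\<forall>h\<in>F. h i = t"
      using F i unfolding hypergrid_def by fastforce
    moreover have "F \<noteq> {}"
      using induced_saturated_nonempty[OF sat] \<open>2 \<le> t\<close> \<open>2 \<le> card P\<close> by simp
    ultimately show thesis
      using twin_below_exists[OF F _ \<open>2 \<le> t\<close> i] that by metis
  qed
  then show False
    using induced_saturated_no_twin[OF sat po uctp] by blast
qed

lemma induced_saturated_exists:
  assumes "P \<noteq> {}"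
  shows "\<exists>F. induced_saturated t n P r F"
proof -
  define C where "C = {F. F \<subseteq> hypergrid t n \<and> induced_free P r F}"
  have "finite C"
    using finite_hypergrid unfolding C_def by (auto intro: rev_finite_subset[of "Pow _"])
  moreover have "{} \<in> C"
    using \<open>P \<noteq> {}\<close> unfolding C_def induced_free_def induced_copy_def by blast
  ultimately obtain F where "F \<in> C" and F_max: "\<forall>G\<in>C. F \<subseteq> G \<longrightarrow> F = G"
    using finite_has_maximal by blast
  have "\<not> induced_free P r (insert f F)" if "f \<in> hypergrid t n - F" for f
    using that F_max \<open>F \<in> C\<close> unfolding C_def by blast
  with \<open>F \<in> C\<close> show ?thesis
    unfolding C_def induced_saturated_def by blast
qed

lemma sat_star_attained:
  assumes "P \<noteq> {}"
  obtains F where "induced_saturated t n P r F" and "sat_star t n P r = card F"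
proof -
  let ?S = "{F. induced_saturated t n P r F}"
  have "?S \<subseteq> Pow (hypergrid t n)"
    unfolding induced_saturated_def by blast
  then have "finite (card ` ?S)"
    using finite_hypergrid by (meson finite_imageI finite_Pow_iff rev_finite_subset)
  moreover have "?S \<noteq> {}"
    using induced_saturated_exists[OF assms] by blast
  ultimately have "sat_star t n P r \<in> card ` ?S"
    unfolding sat_star_def by (intro Min_in) auto
  with that show thesis
    by blast
qed

theorem mainTheorem3:
  fixes t :: nat and P :: "'a set" and r :: "'a rel"
  assumes "t \<ge> 2"
    and "finite P" and "card P \<ge> 2"
    and "r \<subseteq> P \<times> P" and "partial_order_on P r"
    and "UCTP P r"
  shows "\<exists>c > (0::real). \<exists>N. \<forall>n \<ge> N.
           embeds_in_grid t n P r \<longrightarrow> c * sqrt (real n) \<le> real (sat_star t n P r)"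
proof (intro exI[of _ 1] conjI exI[of _ 0] allI impI)
  fix n :: nat
  have "P \<noteq> {}"
    using \<open>card P \<ge> 2\<close> by auto
  then obtain F where sat: "induced_saturated t n P r F" and "sat_star t n P r = card F"
    by (rule sat_star_attained)
  have "finite F"
    using sat finite_hypergrid unfolding induced_saturated_def by (auto intro: finite_subset)
  moreover have "\<forall>i\<in>{1..n}. \<exists>g\<in>F. \<exists>h\<in>F. exceeds_only_at i h g"
    using induced_saturated_exceeds_only_at[OF sat \<open>partial_order_on P r\<close> \<open>UCTP P r\<close>] assms
    by blast
  ultimately have "n \<le> card F ^ 2"
    using card_le_square_if_exceeds_only_at[of F "{1..n}"] by simp
  then have "real n \<le> (real (card F))\<^sup>2"
    by (metis of_nat_le_iff of_nat_power)
  then show "1 * sqrt (real n) \<le> real (sat_star t n P r)"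
    using \<open>sat_star t n P r = card F\<close> by (simp add: real_le_lsqrt)
qed simp

end
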